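(* Let $j \in [d]$ and let $\mathcal{Y} = \sum_{k=1}^r \alpha_k \bigcirc_{\ell=1}^d \mathbf{y}^{(\ell)}_k \in \mathbb{C}^{n_1\times\cdots\times n_d}$ be a rank-$r$ tensor in standard form. Let $\epsilon \in (0,1)$ and suppose $\mathbf{A} \in \mathbb{C}^{m\times n_j}$ is an $(\epsilon/4)$-JL embedding into $\mathbb{C}^m$ of the $2r^2 - r$ vectors $$\Big(\bigcup_{1\le h<k\le r}\{\mathbf{y}^{(j)}_k - \mathbf{y}^{(j)}_h,\ \mathbf{y}^{(j)}_k + \mathbf{y}^{(j)}_h,\ \mathbf{y}^{(j)}_k - \mathrm{i}\,\mathbf{y}^{(j)}_h,\ \mathbf{y}^{(j)}_k + \mathrm{i}\,\mathbf{y}^{(j)}_h\}\Big)\cup\{\mathbf{y}^{(j)}_k\}_{k\in[r]} \subset \mathbb{C}^{n_j}.$$ Let $\mathcal{Y}' := \mathcal{Y}\times_j \mathbf{A}$, written in standard form as $$\mathcal{Y}' = \sum_{k=1}^r \alpha'_k \Big( \big(\bigcirc_{\ell<j}\mathbf{y}^{(\ell)}_k\big)\bigcirc \frac{\mathbf{A}\mathbf{y}^{(j)}_k}{\|\mathbf{A}\mathbf{y}^{(j)}_k\|_2}\bigcirc\big(\bigcirc_{\ell>j}\mathbf{y}^{(\ell)}_k\big)\Big),\qquad \alpha'_k = \alpha_k\|\mathbf{A}\mathbf{y}^{(j)}_k\|_2 .$$ Then: (1) $|\alpha'_k - \alpha_k| \leq \epsilon|\alpha_k|/4$ for all $k\in[r]$,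 so that $\|\boldsymbol\alpha'\|_\infty \leq (1+\epsilon/4)\|\boldsymbol\alpha\|_\infty$; (2) $\mu_{\mathcal{Y}',j} \leq \frac{\mu_{\mathcal{Y},j}+\epsilon}{1-\epsilon/4}$, and $\mu_{\mathcal{Y}',\ell} = \mu_{\mathcal{Y},\ell}$ for all $\ell\in[d]\setminus\{j\}$; (3) $\displaystyle \big|\|\mathcal{Y}'\|^2 - \|\mathcal{Y}\|^2\big| \leq \epsilon\Big(1+\sqrt{r(r-1)}\prod_{\ell\neq j}\mu_{\mathcal{Y},\ell}\Big)\|\boldsymbol\alpha\|_2^2 \leq \epsilon\big(1+r\mu_{\mathcal{Y}}^{d-1}\big)\|\boldsymbol\alpha\|_2^2 \leq \epsilon(r+1)\|\boldsymbol\alpha\|_2^2.$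
   Context: Tensors in $\mathbb{C}^{n_1\times\cdots\times n_d}$ have inner product $\langle\mathcal{X},\mathcal{Y}\rangle=\sum\mathcal{X}_{i_1\dots i_d}\overline{\mathcal{Y}_{i_1\dots i_d}}$ and norm $\|\cdot\|$; $\bigcirc$ is the outer product; the $j$-mode product is $(\mathcal{X}\times_j\mathbf{U})_{i_1,\dots,\ell,\dots,i_d}=\sum_{i_j}\mathcal{X}_{i_1,\dots,i_j,\dots,i_d}\mathbf{U}_{\ell,i_j}$; $\mathrm{i}$ is the imaginary unit. A linear map $L$ is an $\epsilon$-JL embedding of a set $S$ if for each $x\in S$, $\|L(x)\|^2=(1+\epsilon_x)\|x\|^2$ for some $\epsilon_x\in(-\epsilon,\epsilon)$. A rank-$r$ tensor in standard form is $\mathcal{Y}=\sum_{k=1}^r\alpha_k\bigcirc_{\ell=1}^d\mathbf{y}^{(\ell)}_k$ with $\|\mathbf{y}^{(\ell)}_k\|_2=1$ for all $\ell,k$; $\boldsymbol\alpha=(\alpha_1,\dots,\alpha_r)$. Relative to this representation, the modewise coherences are $\mu_{\mathcal{Y},\ell}=\max_{k\ne h}|\langle\mathbf{y}^{(\ell)}_k,\mathbf{y}^{(\ell)}_h\rangle|$ and the maximum modewise coherence is $\mu_{\mathcal{Y}}=\max_{\ell\in[d]}\mu_{\mathcal{Y},\ell}$ (for $\mathcal{Y}'$, these are computed from the displayed standard form of $\mathcal{Y}'$). *)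

theory Defs
  imports "HOL-Analysis.Analysis"
begin

text \<open>Conventions: modes are indexed 0..d-1, rank-one terms 0..r-1, vector
 coordinates of mode l are 0..n l - 1.  Vectors in C^n are functions nat => complex
 (only coordinates below n matter), tensors in C^{n_0 x ... x n_{d-1}} are functions
 on multi-indices (nat lists) and only entries in tidx d n matter.\<close>

definition vinner :: "nat \<Rightarrow> (nat \<Rightarrow> complex) \<Rightarrow> (nat \<Rightarrow> complex) \<Rightarrow> complex" where
  "vinner n x y = (\<Sum>i<n. x i * cnj (y i))"

definition vnorm :: "nat \<Rightarrow> (nat \<Rightarrow> complex) \<Rightarrow> real" where
  "vnorm n x = sqrt (\<Sum>i<n. (cmod (x i))\<^sup>2)"

definition matvec :: "nat \<Rightarrow> nat \<Rightarrow> (nat \<Rightarrow> nat \<Rightarrow> complex) \<Rightarrow> (nat \<Rightarrow> complex) \<Rightarrow> (nat \<Rightarrow> complex)" where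
  "matvec m n A x = (\<lambda>a. if a < m then (\<Sum>i<n. A a i * x i) else 0)"

definition JL_embedding :: "real \<Rightarrow> nat \<Rightarrow> nat \<Rightarrow> (nat \<Rightarrow> nat \<Rightarrow> complex) \<Rightarrow> (nat \<Rightarrow> complex) set \<Rightarrow> bool" where
  "JL_embedding eps m n A S \<longleftrightarrow>
     (\<forall>x\<in>S. \<exists>e. - eps < e \<and> e < eps \<and> (vnorm m (matvec m n A x))\<^sup>2 = (1 + e) * (vnorm n x)\<^sup>2)"

definition tidx :: "nat \<Rightarrow> (nat \<Rightarrow> nat) \<Rightarrow> nat list set" where
  "tidx d n = {is. length is = d \<and> (\<forall>l<d. is ! l < n l)}"

definition tnorm :: "nat \<Rightarrow> (nat \<Rightarrow> nat) \<Rightarrow> (nat list \<Rightarrow> complex) \<Rightarrow> real" where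
  "tnorm d n X = sqrt (\<Sum>is\<in>tidx d n. (cmod (X is))\<^sup>2)"

definition cp_tensor :: "nat \<Rightarrow> nat \<Rightarrow> (nat \<Rightarrow> complex) \<Rightarrow> (nat \<Rightarrow> nat \<Rightarrow> nat \<Rightarrow> complex) \<Rightarrow> (nat list \<Rightarrow> complex)" where
  "cp_tensor d r \<alpha> y = (\<lambda>is. \<Sum>k<r. \<alpha> k * (\<Prod>l<d. y l k (is ! l)))"

definition standard_form :: "nat \<Rightarrow> (nat \<Rightarrow> nat) \<Rightarrow> nat \<Rightarrow> (nat \<Rightarrow> nat \<Rightarrow> nat \<Rightarrow> complex) \<Rightarrow> bool" where
  "standard_form d n r y \<longleftrightarrow> (\<forall>l<d. \<forall>k<r. vnorm (n l) (y l k) = 1)"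

text \<open>j-mode product X \<times>_j A, A an (m x n_j) matrix; result lives on tidx d (n(j:=m)).\<close>
definition mode_prod :: "nat \<Rightarrow> (nat \<Rightarrow> nat) \<Rightarrow> nat \<Rightarrow> (nat list \<Rightarrow> complex) \<Rightarrow> (nat \<Rightarrow> nat \<Rightarrow> complex) \<Rightarrow> (nat list \<Rightarrow> complex)" where
  "mode_prod d n j X A = (\<lambda>is. \<Sum>i<n j. X (is[j := i]) * A (is ! j) i)"

text \<open>Modewise coherence mu_l; the maximum over an empty set (r \<le> 1) is taken as 0.\<close>
definition coh :: "(nat \<Rightarrow> nat) \<Rightarrow> nat \<Rightarrow> (nat \<Rightarrow> nat \<Rightarrow> nat \<Rightarrow> complex) \<Rightarrow> nat \<Rightarrow> real" where
  "coh n r y l = Max (insert 0 {cmod (vinner (n l) (y l k) (y l h)) | k h. k < r \<and> h < r \<and> k \<noteq> h})"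

definition max_coh :: "nat \<Rightarrow> (nat \<Rightarrow> nat) \<Rightarrow> nat \<Rightarrow> (nat \<Rightarrow> nat \<Rightarrow> nat \<Rightarrow> complex) \<Rightarrow> real" where
  "max_coh d n r y = Max {coh n r y l | l. l < d}"

definition linf :: "nat \<Rightarrow> (nat \<Rightarrow> complex) \<Rightarrow> real" where
  "linf r \<alpha> = Max (insert 0 {cmod (\<alpha> k) | k. k < r})"

definition l2sq :: "nat \<Rightarrow> (nat \<Rightarrow> complex) \<Rightarrow> real" where
  "l2sq r \<alpha> = (\<Sum>k<r. (cmod (\<alpha> k))\<^sup>2)"

end

theory Submission
  imports Defs
begin

text \<open>
Only the mode-j factors change: the new tensor is the CP tensor with the columns A y_k in mode j,
which after normalization has weights alpha_k |A y_k| and factors A y_k / |A y_k|.  The JL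
hypothesis puts |A y_k|^2 within eps/4 of 1 and, by polarization over y_k +- y_h and
y_k +- i y_h (whose squared norms add up to 8), puts each Gram entry <A y_k, A y_h> within eps/2
of <y_k, y_h>.  The weight bound follows from |s - 1| <= |s^2 - 1|, the coherence bound from
|A y_k| |A y_h| >= 1 - eps/4.  Finally |Y|^2 is the Hermitian form
sum_{k,h} alpha_k conj(alpha_h) prod_l <y_k^(l), y_h^(l)>; its change has diagonal entries of
size at most eps/4 and off-diagonal entries at most eps/2 times the product of the other
coherences, so 2 |alpha_k| |alpha_h| <= |alpha_k|^2 + |alpha_h|^2 bounds it by
(eps/4 + (r - 1) eps/2 prod_{l <> j} mu_l) |alpha|_2^2, and r - 1 <= sqrt (r (r - 1)).
\<close>

lemma abs_diff_one_le_abs_square_diff_one: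
  fixes s :: real
  assumes "0 \<le> s"
  shows "\<bar>s - 1\<bar> \<le> \<bar>s\<^sup>2 - 1\<bar>"
proof -
  have "s\<^sup>2 - 1 = (s - 1) * (s + 1)"
    by (simp add: power2_eq_square algebra_simps)
  then have "\<bar>s\<^sup>2 - 1\<bar> = \<bar>s - 1\<bar> * (s + 1)"
    using assms by (simp add: abs_mult)
  then show ?thesis
    using assms by (simp add: mult_le_cancel_left1)
qed

lemma one_minus_le_mult_of_squares:
  fixes s t :: real
  assumes "0 \<le> s" "0 \<le> t" "\<bar>s\<^sup>2 - 1\<bar> \<le> \<delta>" "\<bar>t\<^sup>2 - 1\<bar> \<le> \<delta>" "\<delta> \<le> 1"
  shows "1 - \<delta> \<le> s * t"
proof (rule power2_le_imp_le)
  have "(1 - \<delta>) * (1 - \<delta>) \<le> s\<^sup>2 * t\<^sup>2"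
    using assms by (intro mult_mono) auto
  then show "(1 - \<delta>)\<^sup>2 \<le> (s * t)\<^sup>2"
    by (simp add: power2_eq_square mult_ac)
qed (use assms in simp)

lemma norm_scale_diff_le:
  fixes s :: real
  assumes "0 \<le> s" "\<bar>s\<^sup>2 - 1\<bar> \<le> \<delta>"
  shows "cmod (a * of_real s - a) \<le> \<delta> * cmod a"
proof -
  have "a * of_real s - a = a * of_real (s - 1)"
    by (simp add: algebra_simps)
  then have "cmod (a * of_real s - a) = cmod a * \<bar>s - 1\<bar>"
    by (simp only: norm_mult norm_of_real)
  also have "\<dots> \<le> cmod a * \<delta>"
    using abs_diff_one_le_abs_square_diff_one[OF assms(1)] assms(2) by (intro mult_left_mono) auto
  finally show ?thesis
    by (simp add: mult.commute)
qed

lemma sqrt_mult_minus_one_bounds: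
  shows "real r - 1 \<le> sqrt (real r * (real r - 1))"
    and "0 \<le> sqrt (real r * (real r - 1))"
    and "sqrt (real r * (real r - 1)) \<le> real r"
proof -
  show "real r - 1 \<le> sqrt (real r * (real r - 1))"
  proof (cases "r = 0")
    case False
    then have "(real r - 1) * (real r - 1) \<le> real r * (real r - 1)"
      by (intro mult_right_mono) auto
    then show ?thesis
      by (intro real_le_rsqrt) (simp add: power2_eq_square)
  qed simp
  show "0 \<le> sqrt (real r * (real r - 1))"
    by (cases r) auto
  show "sqrt (real r * (real r - 1)) \<le> real r"
    by (rule real_le_lsqrt) (auto simp: power2_eq_square intro: mult_left_mono)
qed

lemma error_coefficient_le:
  assumes "0 \<le> \<epsilon>" "0 \<le> Q"
  shows "\<epsilon>/4 + (real r - 1) * (\<epsilon>/2 * Q) \<le> \<epsilon> * (1 + sqrt (real r * (real r - 1)) * Q)"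
proof -
  have "(real r - 1) * (\<epsilon>/2 * Q) \<le> sqrt (real r * (real r - 1)) * (\<epsilon> * Q)"
    using sqrt_mult_minus_one_bounds assms by (intro mult_mono) auto
  then show ?thesis
    using assms unfolding distrib_left mult_1_right by (simp add: mult_ac)
qed

lemma sum_diag_offdiag:
  "(\<Sum>k<r. \<Sum>h<r. if k = h then a * c k else b * (c k + c h) / 2)
    = (a + (real r - 1) * b) * (\<Sum>k<r. c k :: real)"
proof -
  have split: "(if k = h then a * c k else b * (c k + c h) / 2)
      = (if k = h then (a - b) * c k else 0) + b * (c k + c h) / 2" for k h
    by (simp add: algebra_simps)
  have "(\<Sum>k<r. \<Sum>h<r. b * (c k + c h) / 2) = b * real r * (\<Sum>k<r. c k)"
    by (simp add: distrib_left add_divide_distrib sum.distrib sum_divide_distrib[symmetric]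
        sum_distrib_left[symmetric] mult.assoc)
  then show ?thesis
    unfolding split
    by (simp add: sum.distrib distrib_right flip: sum_distrib_left) (simp add: algebra_simps)
qed

lemma vinner_commute: "vinner n x y = cnj (vinner n y x)"
  by (simp add: vinner_def mult.commute)

lemma vnorm_nonneg: "0 \<le> vnorm n x"
  by (simp add: vnorm_def sum_nonneg)

lemma power2_vnorm: "(vnorm n x)\<^sup>2 = (\<Sum>i<n. (cmod (x i))\<^sup>2)"
  by (simp add: vnorm_def sum_nonneg)

lemma vinner_self: "vinner n x x = of_real ((vnorm n x)\<^sup>2)"
  unfolding power2_vnorm vinner_def by (simp only: of_real_sum complex_norm_square)

lemma vinner_cauchy_schwarz: "cmod (vinner n x y) \<le> vnorm n x * vnorm n y"
proof -
  have "cmod (vinner n x y) \<le> (\<Sum>i<n. \<bar>cmod (x i)\<bar> * \<bar>cmod (y i)\<bar>)"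
    unfolding vinner_def by (rule order_trans[OF norm_sum]) (simp add: norm_mult)
  also have "\<dots> \<le> L2_set (\<lambda>i. cmod (x i)) {..<n} * L2_set (\<lambda>i. cmod (y i)) {..<n}"
    by (rule L2_set_mult_ineq)
  finally show ?thesis by (simp add: L2_set_def vnorm_def)
qed

lemma vnorm_divide: "vnorm n (\<lambda>i. x i / of_real c) = vnorm n x / \<bar>c\<bar>"
  by (simp add: vnorm_def norm_divide power_divide sum_divide_distrib[symmetric] real_sqrt_divide)

lemma vnorm_mult_unit: "cmod c = 1 \<Longrightarrow> vnorm n (\<lambda>i. c * x i) = vnorm n x"
  by (simp add: vnorm_def norm_mult)

lemma vinner_divide:
  "vinner n (\<lambda>i. x i / of_real s) (\<lambda>i. y i / of_real t) = vinner n x y / of_real (s * t)"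
  by (simp add: vinner_def sum_divide_distrib)

lemma vnorm_parallelogram:
  "(vnorm n (\<lambda>i. x i + y i))\<^sup>2 + (vnorm n (\<lambda>i. x i - y i))\<^sup>2 = 2 * (vnorm n x)\<^sup>2 + 2 * (vnorm n y)\<^sup>2"
proof -
  have "(cmod (a + b))\<^sup>2 + (cmod (a - b))\<^sup>2 = 2 * (cmod a)\<^sup>2 + 2 * (cmod b)\<^sup>2" for a b :: complex
    unfolding cmod_power2 by (simp add: algebra_simps power2_eq_square)
  then show ?thesis
    by (simp add: power2_vnorm sum.distrib[symmetric] sum_distrib_left)
qed

lemma vinner_polarization:
  "vinner n x y = (of_real ((vnorm n (\<lambda>i. x i + y i))\<^sup>2) - of_real ((vnorm n (\<lambda>i. x i - y i))\<^sup>2)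
     + \<i> * (of_real ((vnorm n (\<lambda>i. x i + \<i> * y i))\<^sup>2) - of_real ((vnorm n (\<lambda>i. x i - \<i> * y i))\<^sup>2))) / 4"
proof -
  have "a * cnj b = ((a + b) * cnj (a + b) - (a - b) * cnj (a - b)
      + \<i> * ((a + \<i> * b) * cnj (a + \<i> * b) - (a - \<i> * b) * cnj (a - \<i> * b))) / 4" for a b :: complex
    by (simp add: algebra_simps)
  then show ?thesis
    unfolding vinner_self[symmetric] vinner_def
    by (simp add: sum_divide_distrib sum_distrib_left sum_subtractf[symmetric] sum.distrib[symmetric]
        algebra_simps)
qed

lemma matvec_add: "matvec m n A (\<lambda>i. x i + y i) = (\<lambda>a. matvec m n A x a + matvec m n A y a)"
  by (auto simp: matvec_def sum.distrib algebra_simps)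

lemma matvec_diff: "matvec m n A (\<lambda>i. x i - y i) = (\<lambda>a. matvec m n A x a - matvec m n A y a)"
  by (auto simp: matvec_def sum_subtractf algebra_simps)

lemma matvec_mult: "matvec m n A (\<lambda>i. c * x i) = (\<lambda>a. c * matvec m n A x a)"
  by (auto simp: matvec_def sum_distrib_left algebra_simps)

lemma JL_embedding_sq_distortion:
  assumes "JL_embedding \<delta> m n A S" "x \<in> S"
  shows "\<bar>(vnorm m (matvec m n A x))\<^sup>2 - (vnorm n x)\<^sup>2\<bar> \<le> \<delta> * (vnorm n x)\<^sup>2"
proof -
  obtain e where e: "\<bar>e\<bar> < \<delta>" "(vnorm m (matvec m n A x))\<^sup>2 = (1 + e) * (vnorm n x)\<^sup>2"
    using assms unfolding JL_embedding_def by force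
  then have "\<bar>(vnorm m (matvec m n A x))\<^sup>2 - (vnorm n x)\<^sup>2\<bar> = \<bar>e\<bar> * (vnorm n x)\<^sup>2"
    by (simp add: algebra_simps abs_mult)
  also have "\<dots> \<le> \<delta> * (vnorm n x)\<^sup>2"
    using e(1) by (intro mult_right_mono) auto
  finally show ?thesis .
qed

lemma JL_embedding_inner_distortion:
  assumes JL: "JL_embedding \<delta> m n A S"
    and S: "(\<lambda>i. x i + y i) \<in> S" "(\<lambda>i. x i - y i) \<in> S"
      "(\<lambda>i. x i + \<i> * y i) \<in> S" "(\<lambda>i. x i - \<i> * y i) \<in> S"
  shows "cmod (vinner m (matvec m n A x) (matvec m n A y) - vinner n x y)
    \<le> \<delta> * ((vnorm n x)\<^sup>2 + (vnorm n y)\<^sup>2)"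
proof -
  define N where "N v = (vnorm n v)\<^sup>2" for v
  define M where "M v = (vnorm m (matvec m n A v))\<^sup>2" for v
  define D where "D v = M v - N v" for v
  let ?p = "\<lambda>i. x i + y i" and ?q = "\<lambda>i. x i - y i"
    and ?u = "\<lambda>i. x i + \<i> * y i" and ?v = "\<lambda>i. x i - \<i> * y i"
  have polM: "vinner m (matvec m n A x) (matvec m n A y)
      = (of_real (M ?p) - of_real (M ?q) + \<i> * (of_real (M ?u) - of_real (M ?v))) / 4"
    unfolding M_def matvec_add matvec_diff matvec_mult by (rule vinner_polarization)
  have polN: "vinner n x y
      = (of_real (N ?p) - of_real (N ?q) + \<i> * (of_real (N ?u) - of_real (N ?v))) / 4"
    unfolding N_def by (rule vinner_polarization)
  have "cmod (vinner m (matvec m n A x) (matvec m n A y) - vinner n x y)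
      = cmod (of_real ((D ?p - D ?q) / 4) + \<i> * of_real ((D ?u - D ?v) / 4))"
    unfolding polM polN D_def by (simp add: field_simps)
  also have "\<dots> \<le> \<bar>(D ?p - D ?q) / 4\<bar> + \<bar>(D ?u - D ?v) / 4\<bar>"
    by (rule order_trans[OF norm_triangle_ineq]) (simp add: norm_mult del: of_real_divide of_real_diff)
  also have "\<dots> \<le> (\<bar>D ?p\<bar> + \<bar>D ?q\<bar> + \<bar>D ?u\<bar> + \<bar>D ?v\<bar>) / 4"
    by simp
  also have "\<dots> \<le> \<delta> * (N ?p + N ?q + N ?u + N ?v) / 4"
    using S by (simp add: D_def M_def N_def JL_embedding_sq_distortion[OF JL] add_mono distrib_left)
  also have "N ?p + N ?q + N ?u + N ?v = 4 * (N x + N y)"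
    using vnorm_parallelogram[of n x y] vnorm_parallelogram[of n x "\<lambda>i. \<i> * y i"]
    by (simp add: N_def vnorm_mult_unit)
  finally show ?thesis by (simp add: N_def algebra_simps)
qed

definition polarization_vectors :: "nat \<Rightarrow> (nat \<Rightarrow> nat \<Rightarrow> complex) \<Rightarrow> (nat \<Rightarrow> complex) set" where
  "polarization_vectors r x =
    (\<Union>k<r. \<Union>h<k. {(\<lambda>i. x k i - x h i), (\<lambda>i. x k i + x h i),
                    (\<lambda>i. x k i - \<i> * x h i), (\<lambda>i. x k i + \<i> * x h i)})
    \<union> {x k | k. k < r}"

lemma JL_embedding_column_norm:
  assumes "JL_embedding \<delta> m n A (polarization_vectors r x)" "vnorm n (x k) = 1" "k < r"
  shows "\<bar>(vnorm m (matvec m n A (x k)))\<^sup>2 - 1\<bar> \<le> \<delta>"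
  using JL_embedding_sq_distortion[OF assms(1), of "x k"] assms(2,3)
  by (auto simp: polarization_vectors_def)

lemma JL_embedding_column_inner:
  assumes JL: "JL_embedding \<delta> m n A (polarization_vectors r x)"
    and unit: "\<And>k. k < r \<Longrightarrow> vnorm n (x k) = 1"
    and "k < r" "h < r" "k \<noteq> h"
  shows "cmod (vinner m (matvec m n A (x k)) (matvec m n A (x h)) - vinner n (x k) (x h)) \<le> 2 * \<delta>"
proof -
  have below: "cmod (vinner m (matvec m n A (x k)) (matvec m n A (x h)) - vinner n (x k) (x h)) \<le> 2 * \<delta>"
    if "h < k" "k < r" for k h
  proof -
    have "{(\<lambda>i. x k i - x h i), (\<lambda>i. x k i + x h i),
        (\<lambda>i. x k i - \<i> * x h i), (\<lambda>i. x k i + \<i> * x h i)} \<subseteq> polarization_vectors r x"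
      unfolding polarization_vectors_def using that by blast
    then have "cmod (vinner m (matvec m n A (x k)) (matvec m n A (x h)) - vinner n (x k) (x h))
        \<le> \<delta> * ((vnorm n (x k))\<^sup>2 + (vnorm n (x h))\<^sup>2)"
      by (intro JL_embedding_inner_distortion[OF JL]) auto
    then show ?thesis
      using unit that by simp
  qed
  show ?thesis
  proof (cases "h < k")
    case True
    then show ?thesis using below \<open>k < r\<close> by blast
  next
    case False
    then have "cmod (vinner m (matvec m n A (x h)) (matvec m n A (x k)) - vinner n (x h) (x k)) \<le> 2 * \<delta>"
      using below \<open>h < r\<close> \<open>k \<noteq> h\<close> by simp
    then show ?thesis
      by (metis complex_mod_cnj complex_cnj_diff vinner_commute)
  qed
qed

lemma tidx_0: "tidx 0 n = {[]}"
  by (auto simp: tidx_def)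

lemma tidx_Suc: "tidx (Suc d) n = (\<lambda>(xs, i). xs @ [i]) ` (tidx d n \<times> {..<n d})"
proof (intro equalityI subsetI)
  fix js assume js: "js \<in> tidx (Suc d) n"
  then have "length js = Suc d"
    by (simp add: tidx_def)
  then obtain xs i where js_eq: "js = xs @ [i]" and len: "length xs = d"
    by (metis length_Suc_conv_rev)
  have all: "(xs @ [i]) ! l < n l" if "l < Suc d" for l
    using js that unfolding js_eq tidx_def by blast
  have "xs ! l < n l" if "l < d" for l
    using all[of l] that len by (simp add: nth_append)
  then have "xs \<in> tidx d n" "i < n d"
    using all[of d] len by (simp_all add: tidx_def nth_append)
  then show "js \<in> (\<lambda>(xs, i). xs @ [i]) ` (tidx d n \<times> {..<n d})"
    using js_eq by auto
next
  fix js assume "js \<in> (\<lambda>(xs, i). xs @ [i]) ` (tidx d n \<times> {..<n d})"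
  then obtain xs i where "js = xs @ [i]" "xs \<in> tidx d n" "i < n d"
    by auto
  then show "js \<in> tidx (Suc d) n"
    by (auto simp: tidx_def nth_append less_Suc_eq)
qed

lemma sum_tidx_prod:
  fixes f :: "nat \<Rightarrow> nat \<Rightarrow> 'a::comm_semiring_1"
  shows "(\<Sum>xs\<in>tidx d n. \<Prod>l<d. f l (xs ! l)) = (\<Prod>l<d. \<Sum>i<n l. f l i)"
proof (induction d)
  case (Suc d)
  have "inj_on (\<lambda>(xs, i). xs @ [i]) (tidx d n \<times> {..<n d})"
    by (auto simp: inj_on_def)
  then have "(\<Sum>xs\<in>tidx (Suc d) n. \<Prod>l<Suc d. f l (xs ! l))
      = (\<Sum>(xs, i)\<in>tidx d n \<times> {..<n d}. \<Prod>l<Suc d. f l ((xs @ [i]) ! l))"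
    unfolding tidx_Suc by (simp add: sum.reindex case_prod_unfold)
  also have "\<dots> = (\<Sum>(xs, i)\<in>tidx d n \<times> {..<n d}. (\<Prod>l<d. f l (xs ! l)) * f d i)"
    by (intro sum.cong refl) (clarsimp simp: tidx_def nth_append)
  also have "\<dots> = (\<Sum>xs\<in>tidx d n. \<Prod>l<d. f l (xs ! l)) * (\<Sum>i<n d. f d i)"
    by (simp add: sum_product sum.cartesian_product)
  finally show ?case
    using Suc by simp
qed (simp add: tidx_0)

lemma tnorm_cong: "(\<And>xs. xs \<in> tidx d n \<Longrightarrow> X xs = Z xs) \<Longrightarrow> tnorm d n X = tnorm d n Z"
  by (simp add: tnorm_def)

lemma power2_tnorm: "(tnorm d n X)\<^sup>2 = (\<Sum>xs\<in>tidx d n. (cmod (X xs))\<^sup>2)"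
  by (simp add: tnorm_def sum_nonneg)

lemma cp_tensor_mult_cnj:
  "cp_tensor d r \<alpha> y xs * cnj (cp_tensor d r \<alpha> y xs)
    = (\<Sum>k<r. \<Sum>h<r. \<alpha> k * cnj (\<alpha> h) * (\<Prod>l<d. y l k (xs ! l) * cnj (y l h (xs ! l))))"
  unfolding cp_tensor_def cnj_sum complex_cnj_mult cnj_prod sum_product prod.distrib
  by (simp add: ac_simps)

lemma tnorm_cp_tensor:
  "of_real ((tnorm d n (cp_tensor d r \<alpha> y))\<^sup>2)
    = (\<Sum>k<r. \<Sum>h<r. \<alpha> k * cnj (\<alpha> h) * (\<Prod>l<d. vinner (n l) (y l k) (y l h)))"
proof -
  have "of_real ((tnorm d n (cp_tensor d r \<alpha> y))\<^sup>2)
      = (\<Sum>xs\<in>tidx d n. cp_tensor d r \<alpha> y xs * cnj (cp_tensor d r \<alpha> y xs))"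
    unfolding power2_tnorm by (simp only: of_real_sum complex_norm_square)
  also have "\<dots> = (\<Sum>k<r. \<Sum>h<r. \<alpha> k * cnj (\<alpha> h)
      * (\<Sum>xs\<in>tidx d n. \<Prod>l<d. y l k (xs ! l) * cnj (y l h (xs ! l))))"
    unfolding cp_tensor_mult_cnj sum_distrib_left
    by (subst sum.swap) (simp add: sum.swap[of _ "tidx d n"])
  also have "\<dots> = (\<Sum>k<r. \<Sum>h<r. \<alpha> k * cnj (\<alpha> h) * (\<Prod>l<d. vinner (n l) (y l k) (y l h)))"
    using sum_tidx_prod[where f = "\<lambda>l i. y l k i * cnj (y l h i)" for k h] by (simp add: vinner_def)
  finally show ?thesis .
qed

lemma norm_quadratic_form_le:
  fixes \<alpha> :: "nat \<Rightarrow> complex" and E :: "nat \<Rightarrow> nat \<Rightarrow> complex"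
  assumes diag: "\<And>k. k < r \<Longrightarrow> cmod (E k k) \<le> a"
    and off: "\<And>k h. k < r \<Longrightarrow> h < r \<Longrightarrow> k \<noteq> h \<Longrightarrow> cmod (E k h) \<le> b"
  shows "cmod (\<Sum>k<r. \<Sum>h<r. \<alpha> k * cnj (\<alpha> h) * E k h) \<le> (a + (real r - 1) * b) * l2sq r \<alpha>"
proof -
  have "cmod (\<alpha> k * cnj (\<alpha> h) * E k h) \<le> (if k = h then a * (cmod (\<alpha> k))\<^sup>2
      else b * ((cmod (\<alpha> k))\<^sup>2 + (cmod (\<alpha> h))\<^sup>2) / 2)" if "k < r" "h < r" for k h
  proof (cases "k = h")
    case True
    then show ?thesis
      using mult_left_mono[OF diag[OF \<open>k < r\<close>], of "(cmod (\<alpha> k))\<^sup>2"]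
      by (simp add: norm_mult power2_eq_square mult_ac)
  next
    case False
    have "cmod (\<alpha> k) * cmod (\<alpha> h) \<le> ((cmod (\<alpha> k))\<^sup>2 + (cmod (\<alpha> h))\<^sup>2) / 2"
      using sum_squares_bound[of "cmod (\<alpha> k)" "cmod (\<alpha> h)"] by simp
    then have "cmod (\<alpha> k) * cmod (\<alpha> h) * cmod (E k h)
        \<le> ((cmod (\<alpha> k))\<^sup>2 + (cmod (\<alpha> h))\<^sup>2) / 2 * b"
      using off[OF that False] by (intro mult_mono) auto
    then show ?thesis
      using False by (simp add: norm_mult mult_ac)
  qed
  then have "cmod (\<Sum>k<r. \<Sum>h<r. \<alpha> k * cnj (\<alpha> h) * E k h)
      \<le> (\<Sum>k<r. \<Sum>h<r. if k = h then a * (cmod (\<alpha> k))\<^sup>2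
          else b * ((cmod (\<alpha> k))\<^sup>2 + (cmod (\<alpha> h))\<^sup>2) / 2)"
    by (intro order_trans[OF norm_sum] sum_mono order_trans[OF norm_sum]) auto
  then show ?thesis
    by (simp only: sum_diag_offdiag l2sq_def)
qed

lemma prod_fun_upd_mode:
  assumes "j < d"
  shows "(\<Prod>l<d. (y(j := z)) l k (xs ! l)) = z k (xs ! j) * (\<Prod>l\<in>{..<d} - {j}. y l k (xs ! l))"
  using assms by (simp add: prod.remove[of "{..<d}" j])

lemma mode_prod_cp_tensor:
  assumes j: "j < d" and xs: "xs \<in> tidx d (n(j := m))"
  shows "mode_prod d n j (cp_tensor d r \<alpha> y) A xs
    = cp_tensor d r \<alpha> (y(j := \<lambda>k. matvec m (n j) A (y j k))) xs"
proof -
  have len: "length xs = d" and xs_j: "xs ! j < m"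
    using xs j by (auto simp: tidx_def)
  define R where "R k = (\<Prod>l\<in>{..<d} - {j}. y l k (xs ! l))" for k
  have "(\<Prod>l<d. y l k (xs[j := i] ! l)) = y j k i * R k" for k i
    using prod_fun_upd_mode[OF j, of y "y j" k "xs[j := i]"] len j
    by (simp add: R_def)
  then have "mode_prod d n j (cp_tensor d r \<alpha> y) A xs
      = (\<Sum>i<n j. \<Sum>k<r. \<alpha> k * R k * (A (xs ! j) i * y j k i))"
    unfolding mode_prod_def cp_tensor_def by (simp add: sum_distrib_left sum_distrib_right mult_ac)
  also have "\<dots> = (\<Sum>k<r. \<alpha> k * R k * matvec m (n j) A (y j k) (xs ! j))"
    by (subst sum.swap) (simp add: matvec_def xs_j sum_distrib_left)
  also have "\<dots> = cp_tensor d r \<alpha> (y(j := \<lambda>k. matvec m (n j) A (y j k))) xs"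
    unfolding cp_tensor_def prod_fun_upd_mode[OF j] R_def by (simp add: mult_ac)
  finally show ?thesis .
qed

lemma cp_tensor_rescale_mode:
  assumes "j < d" and "\<And>k. k < r \<Longrightarrow> c k \<noteq> 0"
  shows "cp_tensor d r \<alpha> (y(j := z)) = cp_tensor d r (\<lambda>k. \<alpha> k * c k) (y(j := \<lambda>k i. z k i / c k))"
  unfolding cp_tensor_def prod_fun_upd_mode[OF assms(1)]
  by (intro ext sum.cong refl) (simp add: assms(2))

lemma standard_form_normalize_mode:
  assumes "standard_form d n r y" and "\<And>k. k < r \<Longrightarrow> vnorm m (z k) \<noteq> 0"
  shows "standard_form d (n(j := m)) r (y(j := \<lambda>k i. z k i / of_real (vnorm m (z k))))"
  using assms unfolding standard_form_def by (simp add: vnorm_divide vnorm_nonneg)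

lemma finite_coh_set: "finite {cmod (vinner (n l) (y l k) (y l h)) | k h. k < (r::nat) \<and> h < r \<and> k \<noteq> h}"
proof (rule finite_subset)
  show "{cmod (vinner (n l) (y l k) (y l h)) | k h. k < r \<and> h < r \<and> k \<noteq> h}
      \<subseteq> (\<lambda>(k, h). cmod (vinner (n l) (y l k) (y l h))) ` ({..<r} \<times> {..<r})"
    by auto
qed auto

lemma coh_le_iff:
  "coh n r y l \<le> B \<longleftrightarrow> 0 \<le> B \<and> (\<forall>k<r. \<forall>h<r. k \<noteq> h \<longrightarrow> cmod (vinner (n l) (y l k) (y l h)) \<le> B)"
  unfolding coh_def using finite_coh_set[of n l y r] by auto

lemma coh_nonneg: "0 \<le> coh n r y l"
  unfolding coh_def using finite_coh_set[of n l y r] by simp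

lemma norm_vinner_le_coh:
  "k < r \<Longrightarrow> h < r \<Longrightarrow> k \<noteq> h \<Longrightarrow> cmod (vinner (n l) (y l k) (y l h)) \<le> coh n r y l"
  unfolding coh_def using finite_coh_set[of n l y r] by (intro Max_ge) auto

lemma coh_le_one: "standard_form d n r y \<Longrightarrow> l < d \<Longrightarrow> coh n r y l \<le> 1"
  unfolding coh_le_iff standard_form_def using vinner_cauchy_schwarz by (metis mult_1 zero_le_one)

lemma coh_le_max_coh: "l < d \<Longrightarrow> coh n r y l \<le> max_coh d n r y"
  unfolding max_coh_def by (intro Max_ge) auto

lemma max_coh_le_iff: "0 < d \<Longrightarrow> max_coh d n r y \<le> B \<longleftrightarrow> (\<forall>l<d. coh n r y l \<le> B)"
  unfolding max_coh_def by (subst Max_le_iff) auto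

lemma max_coh_nonneg: "0 < d \<Longrightarrow> 0 \<le> max_coh d n r y"
  using coh_le_max_coh[of 0 d n r y] coh_nonneg[of n r y 0] by simp

lemma max_coh_le_one: "standard_form d n r y \<Longrightarrow> 0 < d \<Longrightarrow> max_coh d n r y \<le> 1"
  by (simp add: max_coh_le_iff coh_le_one)

lemma prod_coh_le_max_coh_power:
  assumes "j < d"
  shows "(\<Prod>l\<in>{..<d} - {j}. coh n r y l) \<le> max_coh d n r y ^ (d - 1)"
proof -
  have "(\<Prod>l\<in>{..<d} - {j}. coh n r y l) \<le> (\<Prod>l\<in>{..<d} - {j}. max_coh d n r y)"
    by (intro prod_mono) (simp add: coh_nonneg coh_le_max_coh)
  then show ?thesis
    using assms by simp
qed

lemma coherence_factor_le:
  assumes "j < d" "standard_form d n r y"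
  shows "sqrt (real r * (real r - 1)) * (\<Prod>l\<in>{..<d} - {j}. coh n r y l) \<le> real r * max_coh d n r y ^ (d - 1)"
    and "real r * max_coh d n r y ^ (d - 1) \<le> real r"
proof -
  show "sqrt (real r * (real r - 1)) * (\<Prod>l\<in>{..<d} - {j}. coh n r y l) \<le> real r * max_coh d n r y ^ (d - 1)"
    using sqrt_mult_minus_one_bounds prod_coh_le_max_coh_power[OF assms(1)]
    by (intro mult_mono) (auto simp: prod_nonneg coh_nonneg)
  have "max_coh d n r y ^ (d - 1) \<le> 1"
    using max_coh_nonneg max_coh_le_one[OF assms(2)] assms(1) by (intro power_le_one) auto
  then show "real r * max_coh d n r y ^ (d - 1) \<le> real r"
    by (simp add: mult_left_le)
qed

lemma norm_le_linf: "k < r \<Longrightarrow> cmod (\<alpha> k) \<le> linf r \<alpha>"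
  unfolding linf_def by (intro Max_ge) auto

lemma linf_le_iff: "linf r \<alpha> \<le> B \<longleftrightarrow> 0 \<le> B \<and> (\<forall>k<r. cmod (\<alpha> k) \<le> B)"
  unfolding linf_def by auto

lemma linf_le_of_relative_perturbation:
  assumes "\<And>k. k < r \<Longrightarrow> cmod (\<beta> k - \<alpha> k) \<le> c * cmod (\<alpha> k)" and "0 \<le> c"
  shows "linf r \<beta> \<le> (1 + c) * linf r \<alpha>"
  unfolding linf_le_iff
proof (intro conjI allI impI)
  show "0 \<le> (1 + c) * linf r \<alpha>"
    using \<open>0 \<le> c\<close> by (simp add: linf_def)
  fix k assume "k < r"
  have "cmod (\<beta> k) \<le> cmod (\<alpha> k) + cmod (\<beta> k - \<alpha> k)"
    by (metis add.commute diff_add_cancel norm_triangle_ineq)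
  also have "\<dots> \<le> (1 + c) * cmod (\<alpha> k)"
    using assms(1)[OF \<open>k < r\<close>] by (simp add: algebra_simps)
  also have "\<dots> \<le> (1 + c) * linf r \<alpha>"
    using \<open>0 \<le> c\<close> norm_le_linf[OF \<open>k < r\<close>] by (intro mult_left_mono) auto
  finally show "cmod (\<beta> k) \<le> (1 + c) * linf r \<alpha>" .
qed

(* The hypothesis 0 \<le> \<eta> matters only for r \<le> 1, when off is vacuous. *)
lemma coh_normalize_mode_le:
  assumes diag: "\<And>k. k < r \<Longrightarrow> \<bar>(vnorm m (z k))\<^sup>2 - 1\<bar> \<le> \<delta>" and "\<delta> < 1"
    and off: "\<And>k h. k < r \<Longrightarrow> h < r \<Longrightarrow> k \<noteq> h \<Longrightarrow>
      cmod (vinner m (z k) (z h) - vinner (n j) (y j k) (y j h)) \<le> \<eta>"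
    and "0 \<le> \<eta>"
  shows "coh (n(j := m)) r (y(j := \<lambda>k i. z k i / of_real (vnorm m (z k)))) j
    \<le> (coh n r y j + \<eta>) / (1 - \<delta>)"
  unfolding coh_le_iff
proof (intro conjI allI impI)
  show "0 \<le> (coh n r y j + \<eta>) / (1 - \<delta>)"
    using \<open>\<delta> < 1\<close> \<open>0 \<le> \<eta>\<close> coh_nonneg[of n r y j] by simp
  fix k h assume "k < r" "h < r" "k \<noteq> h"
  have "cmod (vinner m (z k) (z h))
      \<le> cmod (vinner (n j) (y j k) (y j h)) + cmod (vinner m (z k) (z h) - vinner (n j) (y j k) (y j h))"
    by (metis add.commute diff_add_cancel norm_triangle_ineq)
  also have "\<dots> \<le> coh n r y j + \<eta>"
    using norm_vinner_le_coh off \<open>k < r\<close> \<open>h < r\<close> \<open>k \<noteq> h\<close> by (intro add_mono)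
  finally have num: "cmod (vinner m (z k) (z h)) \<le> coh n r y j + \<eta>" .
  have den: "1 - \<delta> \<le> vnorm m (z k) * vnorm m (z h)"
    using diag \<open>k < r\<close> \<open>h < r\<close> \<open>\<delta> < 1\<close>
    by (intro one_minus_le_mult_of_squares) (auto simp: vnorm_nonneg)
  show "cmod (vinner ((n(j := m)) j) ((y(j := \<lambda>k i. z k i / of_real (vnorm m (z k)))) j k)
      ((y(j := \<lambda>k i. z k i / of_real (vnorm m (z k)))) j h)) \<le> (coh n r y j + \<eta>) / (1 - \<delta>)"
    using frac_le[OF _ num _ den] \<open>\<delta> < 1\<close> \<open>0 \<le> \<eta>\<close> coh_nonneg[of n r y j]
    by (simp add: vinner_divide norm_divide norm_mult vnorm_nonneg)
qed

lemma tnorm_cp_tensor_mode_change: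
  assumes j: "j < d" and sf: "standard_form d n r y"
    and diag: "\<And>k. k < r \<Longrightarrow> \<bar>(vnorm m (z k))\<^sup>2 - 1\<bar> \<le> \<delta>"
    and off: "\<And>k h. k < r \<Longrightarrow> h < r \<Longrightarrow> k \<noteq> h \<Longrightarrow>
      cmod (vinner m (z k) (z h) - vinner (n j) (y j k) (y j h)) \<le> \<eta>"
  shows "\<bar>(tnorm d (n(j := m)) (cp_tensor d r \<alpha> (y(j := z))))\<^sup>2 - (tnorm d n (cp_tensor d r \<alpha> y))\<^sup>2\<bar>
    \<le> (\<delta> + (real r - 1) * (\<eta> * (\<Prod>l\<in>{..<d} - {j}. coh n r y l))) * l2sq r \<alpha>"
proof -
  define P where "P k h = (\<Prod>l\<in>{..<d} - {j}. vinner (n l) (y l k) (y l h))" for k h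
  define E where "E k h = (vinner m (z k) (z h) - vinner (n j) (y j k) (y j h)) * P k h" for k h
  have gram_new: "(\<Prod>l<d. vinner ((n(j := m)) l) ((y(j := z)) l k) ((y(j := z)) l h))
      = vinner m (z k) (z h) * P k h"
    and gram_old: "(\<Prod>l<d. vinner (n l) (y l k) (y l h)) = vinner (n j) (y j k) (y j h) * P k h" for k h
    using j by (simp_all add: P_def prod.remove[of "{..<d}" j])
  have "of_real ((tnorm d (n(j := m)) (cp_tensor d r \<alpha> (y(j := z))))\<^sup>2 - (tnorm d n (cp_tensor d r \<alpha> y))\<^sup>2)
      = (\<Sum>k<r. \<Sum>h<r. \<alpha> k * cnj (\<alpha> h) * E k h)"
    unfolding of_real_diff tnorm_cp_tensor gram_new gram_old E_def
    by (simp add: sum_subtractf[symmetric] algebra_simps)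
  then have "\<bar>(tnorm d (n(j := m)) (cp_tensor d r \<alpha> (y(j := z))))\<^sup>2 - (tnorm d n (cp_tensor d r \<alpha> y))\<^sup>2\<bar>
      = cmod (\<Sum>k<r. \<Sum>h<r. \<alpha> k * cnj (\<alpha> h) * E k h)"
    by (metis norm_of_real)
  also have "\<dots> \<le> (\<delta> + (real r - 1) * (\<eta> * (\<Prod>l\<in>{..<d} - {j}. coh n r y l))) * l2sq r \<alpha>"
  proof (rule norm_quadratic_form_le)
    fix k assume "k < r"
    then have "P k k = 1" and "vnorm (n j) (y j k) = 1"
      using sf j by (auto simp: P_def standard_form_def vinner_self intro!: prod.neutral)
    then have "E k k = of_real ((vnorm m (z k))\<^sup>2 - 1)"
      by (simp add: E_def vinner_self)
    then show "cmod (E k k) \<le> \<delta>"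
      using diag[OF \<open>k < r\<close>] by (simp only: norm_of_real)
  next
    fix k h assume "k < r" "h < r" "k \<noteq> h"
    have "cmod (P k h) \<le> (\<Prod>l\<in>{..<d} - {j}. coh n r y l)"
      unfolding P_def prod_norm[symmetric]
      using \<open>k < r\<close> \<open>h < r\<close> \<open>k \<noteq> h\<close> by (intro prod_mono) (simp add: norm_vinner_le_coh)
    then show "cmod (E k h) \<le> \<eta> * (\<Prod>l\<in>{..<d} - {j}. coh n r y l)"
      using off[OF \<open>k < r\<close> \<open>h < r\<close> \<open>k \<noteq> h\<close>] unfolding E_def norm_mult
      by (intro mult_mono) (auto intro: order_trans[OF norm_ge_zero])
  qed
  finally show ?thesis .
qed

theorem theorem3:
  fixes d r m j :: nat and n :: "nat \<Rightarrow> nat"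
    and \<alpha> :: "nat \<Rightarrow> complex" and y :: "nat \<Rightarrow> nat \<Rightarrow> nat \<Rightarrow> complex"
    and A :: "nat \<Rightarrow> nat \<Rightarrow> complex" and \<epsilon> :: real
  assumes j: "j < d"
    and sf: "standard_form d n r y"
    and eps: "0 < \<epsilon>" "\<epsilon> < 1"
    and JL: "JL_embedding (\<epsilon>/4) m (n j) A
      ((\<Union>k<r. \<Union>h<k.
          {(\<lambda>i. y j k i - y j h i), (\<lambda>i. y j k i + y j h i),
           (\<lambda>i. y j k i - \<i> * y j h i), (\<lambda>i. y j k i + \<i> * y j h i)})
       \<union> {y j k | k. k < r})"
  defines "Y \<equiv> cp_tensor d r \<alpha> y"
    and "Y' \<equiv> mode_prod d n j (cp_tensor d r \<alpha> y) A"
    and "n' \<equiv> n(j := m)"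
    and "\<alpha>' \<equiv> (\<lambda>k. \<alpha> k * complex_of_real (vnorm m (matvec m (n j) A (y j k))))"
    and "y' \<equiv> (\<lambda>l k. if l = j
                then (\<lambda>i. matvec m (n j) A (y j k) i / complex_of_real (vnorm m (matvec m (n j) A (y j k))))
                else y l k)"
  shows "(standard_form d n' r y' \<and> (\<forall>is\<in>tidx d n'. Y' is = cp_tensor d r \<alpha>' y' is))
    \<and> ((\<forall>k<r. cmod (\<alpha>' k - \<alpha> k) \<le> \<epsilon> * cmod (\<alpha> k) / 4)
         \<and> linf r \<alpha>' \<le> (1 + \<epsilon>/4) * linf r \<alpha>)
    \<and> (coh n' r y' j \<le> (coh n r y j + \<epsilon>) / (1 - \<epsilon>/4)
         \<and> (\<forall>l<d. l \<noteq> j \<longrightarrow> coh n' r y' l = coh n r y l))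
    \<and> (\<bar>(tnorm d n' Y')\<^sup>2 - (tnorm d n Y)\<^sup>2\<bar>
           \<le> \<epsilon> * (1 + sqrt (real r * (real r - 1)) * (\<Prod>l\<in>{..<d} - {j}. coh n r y l)) * l2sq r \<alpha>
         \<and> \<epsilon> * (1 + sqrt (real r * (real r - 1)) * (\<Prod>l\<in>{..<d} - {j}. coh n r y l)) * l2sq r \<alpha>
           \<le> \<epsilon> * (1 + real r * max_coh d n r y ^ (d - 1)) * l2sq r \<alpha>
         \<and> \<epsilon> * (1 + real r * max_coh d n r y ^ (d - 1)) * l2sq r \<alpha> \<le> \<epsilon> * (real r + 1) * l2sq r \<alpha>)"
proof -
  define z where "z k = matvec m (n j) A (y j k)" for k
  define Q where "Q = (\<Prod>l\<in>{..<d} - {j}. coh n r y l)"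
  define L where "L = l2sq r \<alpha>"
  have unit: "\<And>k. k < r \<Longrightarrow> vnorm (n j) (y j k) = 1"
    using sf j by (simp add: standard_form_def)
  have JL': "JL_embedding (\<epsilon>/4) m (n j) A (polarization_vectors r (y j))"
    using JL by (simp add: polarization_vectors_def)
  have diag: "\<And>k. k < r \<Longrightarrow> \<bar>(vnorm m (z k))\<^sup>2 - 1\<bar> \<le> \<epsilon>/4"
    unfolding z_def using JL_embedding_column_norm[OF JL'] unit by blast
  have off: "\<And>k h. k < r \<Longrightarrow> h < r \<Longrightarrow> k \<noteq> h \<Longrightarrow>
      cmod (vinner m (z k) (z h) - vinner (n j) (y j k) (y j h)) \<le> \<epsilon>/2"
    unfolding z_def using JL_embedding_column_inner[OF JL' unit] by simp
  have nz: "\<And>k. k < r \<Longrightarrow> vnorm m (z k) \<noteq> 0"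
    using diag eps by fastforce
  have y': "y' = y(j := \<lambda>k i. z k i / of_real (vnorm m (z k)))"
    and \<alpha>': "\<alpha>' = (\<lambda>k. \<alpha> k * of_real (vnorm m (z k)))"
    and n': "n' = n(j := m)"
    unfolding assms(8-10) z_def by (auto simp: fun_eq_iff)
  have Y'_z: "\<And>xs. xs \<in> tidx d n' \<Longrightarrow> Y' xs = cp_tensor d r \<alpha> (y(j := z)) xs"
    using mode_prod_cp_tensor[OF j] unfolding assms(7) n' z_def by simp
  have rescale: "cp_tensor d r \<alpha> (y(j := z)) = cp_tensor d r \<alpha>' y'"
    using cp_tensor_rescale_mode[OF j, of r "\<lambda>k. of_real (vnorm m (z k))"] nz unfolding y' \<alpha>' by simp
  have weights: "\<And>k. k < r \<Longrightarrow> cmod (\<alpha>' k - \<alpha> k) \<le> \<epsilon>/4 * cmod (\<alpha> k)"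
    unfolding \<alpha>' using norm_scale_diff_le[OF vnorm_nonneg diag] .
  have "\<bar>(tnorm d n' Y')\<^sup>2 - (tnorm d n Y)\<^sup>2\<bar> \<le> (\<epsilon>/4 + (real r - 1) * (\<epsilon>/2 * Q)) * L"
    using tnorm_cp_tensor_mode_change[OF j sf diag off] tnorm_cong[OF Y'_z]
    unfolding n' Q_def L_def assms(6) by simp
  moreover have "0 \<le> Q" "0 \<le> L"
    unfolding Q_def L_def l2sq_def by (simp_all add: prod_nonneg coh_nonneg sum_nonneg)
  ultimately have "\<bar>(tnorm d n' Y')\<^sup>2 - (tnorm d n Y)\<^sup>2\<bar> \<le> \<epsilon> * (1 + sqrt (real r * (real r - 1)) * Q) * L"
    using error_coefficient_le[of \<epsilon> Q r] eps by (auto intro: order_trans mult_right_mono)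
  moreover have "coh n' r y' j \<le> (coh n r y j + \<epsilon>/2) / (1 - \<epsilon>/4)"
    using coh_normalize_mode_le[where n = n and y = y and j = j, OF diag _ off] eps unfolding n' y' by simp
  moreover have "\<dots> \<le> (coh n r y j + \<epsilon>) / (1 - \<epsilon>/4)"
    using eps by (intro divide_right_mono) auto
  ultimately show ?thesis
    using standard_form_normalize_mode[OF sf nz] Y'_z rescale weights coherence_factor_le[OF j sf]
      linf_le_of_relative_perturbation[OF weights] eps \<open>0 \<le> L\<close>
    unfolding Q_def L_def y' n'
    by (auto simp: coh_def mult.commute intro!: mult_right_mono mult_left_mono)
qed

end
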